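(* There exists a constant $c>0$ such that for infinitely many integers $r\ge1$, there is a $1$-gap planar graph $G$ with radius at most $r$ and treewidth $\mathrm{tw}(G)\ge 2^{cr}$.
   Context: Graphs are finite, simple, undirected. An embedded graph has vertices as distinct points of $\mathbb{R}^2$ and each edge $uv$ as a curve with endpoints $u,v$ containing no vertex in its interior; a crossing is a point common to two edges other than their endpoints. An embedded graph is $k$-gap planar if every crossing can be charged to one of the two edges involved so that at most $k$ crossings are charged to each edge; a graph is $k$-gap planar if it is isomorphic to a $k$-gap planar embedded graph. *)

theory Defs
  imports "HOL-Analysis.Analysis" "HOL-Library.Extended_Nat"
begin

definition simple_graph :: "'a set \<Rightarrow> 'a set set \<Rightarrow> bool" where
  "simple_graph V E \<longleftrightarrow> finite V \<and> (\<forall>e\<in>E. e \<subseteq> V \<and> card e = 2)"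

definition adj_rel :: "'a set set \<Rightarrow> ('a \<times> 'a) set" where
  "adj_rel E = {(u, v). {u, v} \<in> E}"

definition graph_dist :: "'a set set \<Rightarrow> 'a \<Rightarrow> 'a \<Rightarrow> enat" where
  "graph_dist E u v = (INF n \<in> {n. (u, v) \<in> adj_rel E ^^ n}. enat n)"

definition eccentricity :: "'a set \<Rightarrow> 'a set set \<Rightarrow> 'a \<Rightarrow> enat" where
  "eccentricity V E v = (SUP u \<in> V. graph_dist E v u)"

definition radius :: "'a set \<Rightarrow> 'a set set \<Rightarrow> enat" where
  "radius V E = (INF v \<in> V. eccentricity V E v)"

definition connected_in :: "'a set set \<Rightarrow> 'a set \<Rightarrow> bool" where
  "connected_in E S \<longleftrightarrow>
     (\<forall>u\<in>S. \<forall>v\<in>S. (u, v) \<in> (adj_rel {e\<in>E. e \<subseteq> S})\<^sup>*)"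

definition is_tree :: "'a set \<Rightarrow> 'a set set \<Rightarrow> bool" where
  "is_tree N F \<longleftrightarrow> simple_graph N F \<and> N \<noteq> {} \<and> connected_in F N
                    \<and> finite F \<and> card F + 1 = card N"

definition tree_decomposition ::
  "'a set \<Rightarrow> 'a set set \<Rightarrow> nat set \<Rightarrow> nat set set \<Rightarrow> (nat \<Rightarrow> 'a set) \<Rightarrow> bool" where
  "tree_decomposition V E N F B \<longleftrightarrow>
     is_tree N F \<and>
     (\<forall>t\<in>N. B t \<subseteq> V) \<and>
     (\<forall>v\<in>V. \<exists>t\<in>N. v \<in> B t) \<and>
     (\<forall>e\<in>E. \<exists>t\<in>N. e \<subseteq> B t) \<and>
     (\<forall>v\<in>V. connected_in F {t\<in>N. v \<in> B t})"

definition decomposition_width :: "nat set \<Rightarrow> (nat \<Rightarrow> 'a set) \<Rightarrow> nat" where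
  "decomposition_width N B = Max ((\<lambda>t. card (B t)) ` N) - 1"

definition treewidth :: "'a set \<Rightarrow> 'a set set \<Rightarrow> nat" where
  "treewidth V E = Min {w. \<exists>N F B. tree_decomposition V E N F B \<and> decomposition_width N B = w}"

text \<open>A crossing is a pair of distinct edges together with a common point of
their curves other than their endpoints; crossings are recorded as (point, {e1,e2}).\<close>

definition crossings ::
  "'a set \<Rightarrow> 'a set set \<Rightarrow> ('a \<Rightarrow> real \<times> real) \<Rightarrow> ('a set \<Rightarrow> real \<Rightarrow> real \<times> real)
     \<Rightarrow> ((real \<times> real) \<times> 'a set set) set" where
  "crossings V E pos curve =
     {(p, {e1, e2}) | p e1 e2. e1 \<in> E \<and> e2 \<in> E \<and> e1 \<noteq> e2 \<and>
        p \<in> path_image (curve e1) \<and> p \<in> path_image (curve e2) \<and>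
        p \<notin> pos ` (e1 \<union> e2)}"

definition valid_drawing ::
  "'a set \<Rightarrow> 'a set set \<Rightarrow> ('a \<Rightarrow> real \<times> real) \<Rightarrow> ('a set \<Rightarrow> real \<Rightarrow> real \<times> real) \<Rightarrow> bool" where
  "valid_drawing V E pos curve \<longleftrightarrow>
     inj_on pos V \<and>
     (\<forall>e\<in>E. arc (curve e) \<and>
        (\<exists>u v. e = {u, v} \<and> pathstart (curve e) = pos u \<and> pathfinish (curve e) = pos v) \<and>
        (\<forall>w\<in>V. pos w \<in> path_image (curve e) \<longrightarrow> w \<in> e))"

definition k_gap_planar_drawing ::
  "nat \<Rightarrow> 'a set \<Rightarrow> 'a set set \<Rightarrow> ('a \<Rightarrow> real \<times> real) \<Rightarrow> ('a set \<Rightarrow> real \<Rightarrow> real \<times> real) \<Rightarrow> bool" where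
  "k_gap_planar_drawing k V E pos curve \<longleftrightarrow>
     valid_drawing V E pos curve \<and>
     (\<exists>charge. (\<forall>x\<in>crossings V E pos curve. charge x \<in> snd x) \<and>
        (\<forall>e\<in>E. finite {x\<in>crossings V E pos curve. charge x = e} \<and>
                card {x\<in>crossings V E pos curve. charge x = e} \<le> k))"

text \<open>A graph is k-gap planar if it (or, equivalently, an isomorphic copy) has a
k-gap planar drawing.\<close>
definition k_gap_planar :: "nat \<Rightarrow> 'a set \<Rightarrow> 'a set set \<Rightarrow> bool" where
  "k_gap_planar k V E \<longleftrightarrow> (\<exists>pos curve. k_gap_planar_drawing k V E pos curve)"

end

(*
  Take 2^m complete binary trees of height m (the rows) and 2^m paths (the columns), the j-th
  column running through the j-th leaf of every row, and join the first leaves of all rows by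
  one more complete binary tree (the spine). Every vertex is within distance 5m of the root of
  the spine. Row i and column j always meet, so the sets row i \<union> column j form a bramble; any
  bag of a tree decomposition meets all of them, hence meets every row or every column, and the
  treewidth is at least 2^m - 1.

  Drawn with straight segments on the integer lattice, row i occupies a horizontal strip with
  the nodes at their in-order positions, column j is the vertical line x = 2j, and the spine lies
  in the half-plane x < 0. Every edge interior lies in a cell determined by the edge, so two edges
  cross only if one is a row edge and the other a column edge, and a column edge crosses at most
  one row edge. Charging each crossing to its column edge shows that the graph is 1-gap planar.
  With r = 5m this gives treewidth at least 2^(r/10).
*)
theory Submission
  imports Defs "HOL-Library.Nat_Bijection"
begin

section \<open>Connectivity and trees\<close>

lemma adj_rel_iff [simp]: "(u, v) \<in> adj_rel E \<longleftrightarrow> {u, v} \<in> E"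
  unfolding adj_rel_def by auto

lemma sym_adj_rel: "sym (adj_rel E)"
  unfolding sym_def by (auto simp: insert_commute)

abbreviation induced_adj :: "'a set set \<Rightarrow> 'a set \<Rightarrow> ('a \<times> 'a) set" where
  "induced_adj E S \<equiv> adj_rel {e \<in> E. e \<subseteq> S}"

lemma induced_adj_rtrancl_mono:
  assumes "E \<subseteq> E'" "S \<subseteq> S'" "(u, v) \<in> (induced_adj E S)\<^sup>*"
  shows "(u, v) \<in> (induced_adj E' S')\<^sup>*"
proof -
  have "induced_adj E S \<subseteq> induced_adj E' S'"
    using assms(1,2) unfolding adj_rel_def by auto
  then show ?thesis
    using assms(3) rtrancl_mono by blast
qed

lemma connected_in_mono_edges: "E \<subseteq> E' \<Longrightarrow> connected_in E S \<Longrightarrow> connected_in E' S"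
  unfolding connected_in_def using induced_adj_rtrancl_mono[of E E' S S] by blast

lemma connected_inI_hub:
  assumes "h \<in> X" "\<And>u. u \<in> X \<Longrightarrow> (h, u) \<in> (induced_adj E X)\<^sup>*"
  shows "connected_in E X"
  unfolding connected_in_def
proof (intro ballI)
  fix u v assume "u \<in> X" "v \<in> X"
  have "(u, h) \<in> (induced_adj E X)\<^sup>*"
    using sym_rtrancl[OF sym_adj_rel] assms(2)[OF \<open>u \<in> X\<close>] by (rule symD)
  then show "(u, v) \<in> (induced_adj E X)\<^sup>*"
    using assms(2)[OF \<open>v \<in> X\<close>] by (rule rtrancl_trans)
qed

lemma connected_in_Un:
  assumes "connected_in E A" "connected_in E B" "A \<inter> B \<noteq> {}"
  shows "connected_in E (A \<union> B)"
proof -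
  obtain h where h: "h \<in> A" "h \<in> B"
    using assms(3) by blast
  have "(h, u) \<in> (induced_adj E (A \<union> B))\<^sup>*" if "u \<in> A \<union> B" for u
  proof (cases "u \<in> A")
    case True
    then have "(h, u) \<in> (induced_adj E A)\<^sup>*"
      using h(1) assms(1) unfolding connected_in_def by blast
    then show ?thesis
      by (rule induced_adj_rtrancl_mono[rotated 2]) auto
  next
    case False
    then have "(h, u) \<in> (induced_adj E B)\<^sup>*"
      using that h(2) assms(2) unfolding connected_in_def by blast
    then show ?thesis
      by (rule induced_adj_rtrancl_mono[rotated 2]) auto
  qed
  then show ?thesis
    using h by (intro connected_inI_hub) auto
qed

lemma connected_in_incident_edge:
  assumes "connected_in F N" "v \<in> N" "w \<in> N" "w \<noteq> v"
  shows "\<exists>e\<in>F. v \<in> e"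
proof -
  have "(v, w) \<in> (induced_adj F N)\<^sup>*"
    using assms(1-3) unfolding connected_in_def by blast
  then obtain x where "(v, x) \<in> induced_adj F N"
    using assms(4) by (metis converse_rtranclE)
  then show ?thesis
    by auto
qed

text \<open>Handshake: the degrees sum to 2 |F| = 2 |N| - 2, and connectivity makes them positive.\<close>
lemma tree_has_vertex_of_degree_1:
  assumes T: "is_tree N F" and two: "2 \<le> card N"
  shows "\<exists>l\<in>N. card {e \<in> F. l \<in> e} = 1"
proof -
  from T have fin: "finite N" "finite F" and edges: "\<And>e. e \<in> F \<Longrightarrow> e \<subseteq> N \<and> card e = 2"
    and con: "connected_in F N" and cardF: "card F + 1 = card N"
    unfolding is_tree_def simple_graph_def by auto
  define deg where "deg v = card {e \<in> F. v \<in> e}" for v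
  have "(\<Sum>v\<in>N. deg v) = (\<Sum>e\<in>F. 2)"
    unfolding deg_def
  proof (rule sum_multicount_gen[OF fin])
    show "\<forall>e\<in>F. card {v \<in> N. v \<in> e} = 2"
    proof
      fix e assume "e \<in> F"
      then have "{v \<in> N. v \<in> e} = e"
        using edges by blast
      then show "card {v \<in> N. v \<in> e} = 2"
        using edges[OF \<open>e \<in> F\<close>] by simp
    qed
  qed
  then have deg_sum: "(\<Sum>v\<in>N. deg v) < (\<Sum>v\<in>N. 2)"
    using cardF by simp
  have deg_pos: "1 \<le> deg v" if "v \<in> N" for v
  proof -
    have "\<not> N \<subseteq> {v}"
    proof
      assume "N \<subseteq> {v}"
      then have "card N \<le> card {v}"
        by (intro card_mono) auto
      then show False
        using two by simp
    qed
    then obtain w where "w \<in> N" "w \<noteq> v"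
      by blast
    then have "{e \<in> F. v \<in> e} \<noteq> {}"
      using connected_in_incident_edge[OF con that] by blast
    then show ?thesis
      unfolding deg_def using fin(2) by (simp add: Suc_le_eq card_gt_0_iff)
  qed
  have "\<not> (\<forall>v\<in>N. 2 \<le> deg v)"
  proof
    assume "\<forall>v\<in>N. 2 \<le> deg v"
    then have "(\<Sum>v\<in>N. 2) \<le> (\<Sum>v\<in>N. deg v)"
      by (intro sum_mono) auto
    then show False
      using deg_sum by simp
  qed
  then obtain l where "l \<in> N" "deg l < 2"
    by (auto simp: not_le)
  then show ?thesis
    using deg_pos[of l] unfolding deg_def by (intro bexI[of _ l]) auto
qed

lemma tree_has_leaf:
  assumes "is_tree N F" "2 \<le> card N"
  shows "\<exists>l p. l \<in> N \<and> p \<in> N \<and> l \<noteq> p \<and> {l, p} \<in> F \<and> (\<forall>e\<in>F. l \<in> e \<longrightarrow> e = {l, p})"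
proof -
  obtain l where "l \<in> N" "card {e \<in> F. l \<in> e} = 1"
    using tree_has_vertex_of_degree_1[OF assms] by blast
  then obtain e0 where e0: "{e \<in> F. l \<in> e} = {e0}"
    using card_1_singletonE by blast
  then have "e0 \<in> F" "l \<in> e0"
    by auto
  then have "e0 \<subseteq> N" "card e0 = 2"
    using assms(1) unfolding is_tree_def simple_graph_def by auto
  then obtain x y where xy: "e0 = {x, y}" "x \<noteq> y"
    using card_2_iff[of e0] by blast
  define p where "p = (if x = l then y else x)"
  have p: "e0 = {l, p}" "l \<noteq> p"
    using xy \<open>l \<in> e0\<close> unfolding p_def by auto
  have "e = {l, p}" if "e \<in> F" "l \<in> e" for e
  proof -
    have "e \<in> {e0}"
      using that by (simp only: e0[symmetric]) simp
    then show ?thesis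
      using p(1) by simp
  qed
  moreover have "p \<in> N"
    using \<open>e0 \<subseteq> N\<close> p(1) by blast
  ultimately show ?thesis
    using \<open>l \<in> N\<close> p(2) \<open>e0 \<in> F\<close> unfolding p(1) by blast
qed

text \<open>A walk that starts away from the leaf l can only step onto l from p and off l back to p, so
  cutting out these detours gives a walk avoiding l.\<close>
lemma induced_walk_avoiding_leaf:
  assumes lp: "l \<noteq> p" and leaf: "\<forall>e\<in>F. l \<in> e \<longrightarrow> e = {l, p}"
    and u: "u \<in> S" "u \<noteq> l" and walk: "(u, v) \<in> (induced_adj F S)\<^sup>*"
  shows "(v \<noteq> l \<longrightarrow> (u, v) \<in> (induced_adj (F - {{l, p}}) (S - {l}))\<^sup>*) \<and>
         (v = l \<longrightarrow> p \<in> S \<and> (u, p) \<in> (induced_adj (F - {{l, p}}) (S - {l}))\<^sup>*)"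
  using walk
proof (induction rule: rtrancl_induct)
  case base
  then show ?case
    using u by auto
next
  case (step v w)
  let ?R = "induced_adj (F - {{l, p}}) (S - {l})"
  from step.hyps(2) have vw: "{v, w} \<in> F" "{v, w} \<subseteq> S"
    by auto
  show ?case
  proof (cases "w = l")
    case True
    show ?thesis
    proof (cases "v = l")
      case True
      then show ?thesis
        using step.IH \<open>w = l\<close> by auto
    next
      case False
      with vw \<open>w = l\<close> leaf have "{v, l} = {l, p}"
        by auto
      then have "v = p"
        using False by (auto simp: doubleton_eq_iff)
      then show ?thesis
        using step.IH False \<open>w = l\<close> vw by auto
    qed
  next
    case False
    show ?thesis
    proof (cases "v = l")
      case True
      with vw leaf have "{l, w} = {l, p}"
        by auto
      then have "w = p"
        using False by (auto simp: doubleton_eq_iff)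
      then show ?thesis
        using step.IH True False by auto
    next
      case v: False
      have "{v, w} \<noteq> {l, p}"
        using v False by (auto simp: doubleton_eq_iff)
      then have "(v, w) \<in> ?R"
        using vw v False by auto
      then show ?thesis
        using step.IH v False by (meson rtrancl.rtrancl_into_rtrancl)
    qed
  qed
qed

lemma connected_in_remove_leaf:
  assumes "l \<noteq> p" "\<forall>e\<in>F. l \<in> e \<longrightarrow> e = {l, p}" "connected_in F S"
  shows "connected_in (F - {{l, p}}) (S - {l})"
  using induced_walk_avoiding_leaf[OF assms(1,2)] assms(3) unfolding connected_in_def by blast

lemma connected_in_leaf_neighbour:
  assumes "l \<noteq> p" "\<forall>e\<in>F. l \<in> e \<longrightarrow> e = {l, p}" "connected_in F S" "l \<in> S" "S \<noteq> {l}"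
  shows "p \<in> S"
proof -
  obtain u where "u \<in> S" "u \<noteq> l"
    using assms(4,5) by blast
  then show ?thesis
    using induced_walk_avoiding_leaf[OF assms(1,2), of u S l] assms(3,4) unfolding connected_in_def by blast
qed

lemma tree_remove_leaf:
  assumes T: "is_tree N F" and "p \<in> N" "l \<noteq> p" "{l, p} \<in> F"
    and leaf: "\<forall>e\<in>F. l \<in> e \<longrightarrow> e = {l, p}"
  shows "is_tree (N - {l}) (F - {{l, p}})"
proof -
  from T have fin: "finite N" "finite F" and "card F + 1 = card N" "l \<in> N"
    using assms(4) unfolding is_tree_def simple_graph_def by auto
  then have "card (F - {{l, p}}) + 1 = card (N - {l})"
    using assms(4) card_gt_0_iff[of F] by (auto simp: card_Diff_singleton)
  then show ?thesis
    using T assms(2,3) connected_in_remove_leaf[OF assms(3) leaf] leaf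
    unfolding is_tree_def simple_graph_def by auto
qed

lemma subtrees_remove_leaf:
  assumes lp: "l \<noteq> p" and leaf: "\<forall>e\<in>F. l \<in> e \<longrightarrow> e = {l, p}"
    and sub: "\<And>X. X \<in> \<X> \<Longrightarrow> X \<subseteq> N \<and> X \<noteq> {} \<and> connected_in F X" and "{l} \<notin> \<X>"
    and meet: "\<And>X Y. X \<in> \<X> \<Longrightarrow> Y \<in> \<X> \<Longrightarrow> X \<inter> Y \<noteq> {}"
  shows "\<forall>X'\<in>(\<lambda>X. X - {l}) ` \<X>. X' \<subseteq> N - {l} \<and> X' \<noteq> {} \<and> connected_in (F - {{l, p}}) X'"
    and "\<forall>X'\<in>(\<lambda>X. X - {l}) ` \<X>. \<forall>Y'\<in>(\<lambda>X. X - {l}) ` \<X>. X' \<inter> Y' \<noteq> {}"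
proof -
  show "\<forall>X'\<in>(\<lambda>X. X - {l}) ` \<X>. X' \<subseteq> N - {l} \<and> X' \<noteq> {} \<and> connected_in (F - {{l, p}}) X'"
  proof
    fix X' assume "X' \<in> (\<lambda>X. X - {l}) ` \<X>"
    then obtain X where X: "X \<in> \<X>" "X' = X - {l}"
      by blast
    have "X \<subseteq> N" "X \<noteq> {}" "connected_in F X" "X \<noteq> {l}"
      using sub[OF X(1)] X(1) \<open>{l} \<notin> \<X>\<close> by auto
    then have "X - {l} \<noteq> {}"
      by (metis Diff_eq_empty_iff subset_singleton_iff)
    then show "X' \<subseteq> N - {l} \<and> X' \<noteq> {} \<and> connected_in (F - {{l, p}}) X'"
      using X(2) \<open>X \<subseteq> N\<close> connected_in_remove_leaf[OF lp leaf \<open>connected_in F X\<close>] by blast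
  qed
  have p_in: "p \<in> X" if "X \<in> \<X>" "l \<in> X" for X
  proof (rule connected_in_leaf_neighbour[OF lp leaf _ \<open>l \<in> X\<close>])
    show "connected_in F X"
      using sub[OF \<open>X \<in> \<X>\<close>] by blast
    show "X \<noteq> {l}"
      using \<open>X \<in> \<X>\<close> \<open>{l} \<notin> \<X>\<close> by blast
  qed
  show "\<forall>X'\<in>(\<lambda>X. X - {l}) ` \<X>. \<forall>Y'\<in>(\<lambda>X. X - {l}) ` \<X>. X' \<inter> Y' \<noteq> {}"
  proof (intro ballI)
    fix X' Y' assume "X' \<in> (\<lambda>X. X - {l}) ` \<X>" "Y' \<in> (\<lambda>X. X - {l}) ` \<X>"
    then obtain X Y where XY: "X \<in> \<X>" "X' = X - {l}" "Y \<in> \<X>" "Y' = Y - {l}"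
      by blast
    obtain x where x: "x \<in> X" "x \<in> Y"
      using meet[OF XY(1,3)] by blast
    show "X' \<inter> Y' \<noteq> {}"
    proof (cases "x = l")
      case True
      then have "p \<in> X'" "p \<in> Y'"
        using XY p_in[OF XY(1)] p_in[OF XY(3)] x lp by auto
      then show ?thesis
        by blast
    next
      case False
      then show ?thesis
        using XY(2,4) x by blast
    qed
  qed
qed

text \<open>The Helly property of subtrees, by induction on the tree: removing a leaf keeps the members
  subtrees, and a member containing the leaf and another vertex also contains its neighbour.\<close>
lemma tree_Helly:
  assumes "is_tree N F"
    and "\<And>X. X \<in> \<X> \<Longrightarrow> X \<subseteq> N \<and> X \<noteq> {} \<and> connected_in F X"
    and "\<And>X Y. X \<in> \<X> \<Longrightarrow> Y \<in> \<X> \<Longrightarrow> X \<inter> Y \<noteq> {}"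
  shows "\<exists>t\<in>N. \<forall>X\<in>\<X>. t \<in> X"
  using assms
proof (induction "card N" arbitrary: N F \<X> rule: less_induct)
  case less
  note T = less.prems(1) and sub = less.prems(2) and meet = less.prems(3)
  from T have fin: "finite N" and "N \<noteq> {}"
    unfolding is_tree_def simple_graph_def by auto
  show ?case
  proof (cases "2 \<le> card N")
    case False
    then have "card N = 1"
      using fin \<open>N \<noteq> {}\<close> card_gt_0_iff[of N] by linarith
    then obtain t where "N = {t}"
      using card_1_singletonE by blast
    moreover have "t \<in> X" if "X \<in> \<X>" for X
      using sub[OF that] \<open>N = {t}\<close> by (auto simp: subset_singleton_iff)
    ultimately show ?thesis
      by blast
  next
    case True
    obtain l p where lp: "l \<in> N" "p \<in> N" "l \<noteq> p" "{l, p} \<in> F"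
      and leaf: "\<forall>e\<in>F. l \<in> e \<longrightarrow> e = {l, p}"
      using tree_has_leaf[OF T True] by blast
    show ?thesis
    proof (cases "{l} \<in> \<X>")
      case True
      then show ?thesis
        using meet lp(1) by blast
    next
      case False
      let ?\<X> = "(\<lambda>X. X - {l}) ` \<X>"
      note smaller = subtrees_remove_leaf[OF lp(3) leaf sub False meet]
      have "\<exists>t\<in>N - {l}. \<forall>X'\<in>?\<X>. t \<in> X'"
      proof (rule less.hyps)
        show "card (N - {l}) < card N"
          using fin lp(1) by (meson card_Diff1_less)
        show "is_tree (N - {l}) (F - {{l, p}})"
          by (rule tree_remove_leaf[OF T lp(2-4) leaf])
        show "X' \<subseteq> N - {l} \<and> X' \<noteq> {} \<and> connected_in (F - {{l, p}}) X'" if "X' \<in> ?\<X>" for X'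
          using bspec[OF smaller(1) that] .
        show "X' \<inter> Y' \<noteq> {}" if "X' \<in> ?\<X>" "Y' \<in> ?\<X>" for X' Y'
          using bspec[OF bspec[OF smaller(2) that(1)] that(2)] .
      qed
      then obtain t where t: "t \<in> N - {l}" "\<forall>X'\<in>?\<X>. t \<in> X'"
        by blast
      have "t \<in> X" if "X \<in> \<X>" for X
        using bspec[OF t(2) imageI[OF that]] by blast
      then show ?thesis
        using t(1) by blast
    qed
  qed
qed

section \<open>Tree decompositions and brambles\<close>

lemma tree_decomposition_connected_preimage:
  assumes TD: "tree_decomposition V E N F B" and "X \<subseteq> V" "connected_in E X"
  shows "connected_in F {t \<in> N. B t \<inter> X \<noteq> {}}"
proof -
  let ?T = "{t \<in> N. B t \<inter> X \<noteq> {}}"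
  from TD have cover: "\<forall>e\<in>E. \<exists>t\<in>N. e \<subseteq> B t"
    and conn: "\<forall>v\<in>V. connected_in F {t \<in> N. v \<in> B t}"
    unfolding tree_decomposition_def by auto
  have bags_of_vertex: "(s, s') \<in> (induced_adj F ?T)\<^sup>*"
    if "v \<in> X" "s \<in> N" "v \<in> B s" "s' \<in> N" "v \<in> B s'" for v s s'
  proof -
    have "(s, s') \<in> (induced_adj F {t \<in> N. v \<in> B t})\<^sup>*"
      using conn that assms(2) unfolding connected_in_def by blast
    then show ?thesis
      using induced_adj_rtrancl_mono[of F F "{t \<in> N. v \<in> B t}" ?T] that(1) by blast
  qed
  have "\<forall>s s'. s \<in> N \<and> u \<in> B s \<and> s' \<in> N \<and> v \<in> B s' \<longrightarrow> (s, s') \<in> (induced_adj F ?T)\<^sup>*"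
    if "(u, v) \<in> (induced_adj E X)\<^sup>*" "u \<in> X" for u v
    using that(1)
  proof (induction rule: rtrancl_induct)
    case base
    then show ?case
      using bags_of_vertex that(2) by blast
  next
    case (step v w)
    then have "{v, w} \<in> E" "{v, w} \<subseteq> X"
      by auto
    then obtain s0 where "s0 \<in> N" "{v, w} \<subseteq> B s0"
      using cover by blast
    then show ?case
      using step.IH bags_of_vertex[of w s0] \<open>{v, w} \<subseteq> X\<close>
      by (meson insert_subset rtrancl_trans)
  qed
  then show ?thesis
    using assms(3) unfolding connected_in_def by blast
qed

lemma tree_decomposition_bag_meets_bramble:
  assumes TD: "tree_decomposition V E N F B"
    and bramble: "\<And>X. X \<in> \<X> \<Longrightarrow> X \<subseteq> V \<and> X \<noteq> {} \<and> connected_in E X"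
    and meet: "\<And>X Y. X \<in> \<X> \<Longrightarrow> Y \<in> \<X> \<Longrightarrow> X \<inter> Y \<noteq> {}"
  shows "\<exists>t\<in>N. \<forall>X\<in>\<X>. B t \<inter> X \<noteq> {}"
proof -
  let ?T = "\<lambda>X. {t \<in> N. B t \<inter> X \<noteq> {}}"
  from TD have tree: "is_tree N F" and cover: "\<And>v. v \<in> V \<Longrightarrow> \<exists>t\<in>N. v \<in> B t"
    unfolding tree_decomposition_def by auto
  have "\<exists>t\<in>N. \<forall>Y\<in>?T ` \<X>. t \<in> Y"
  proof (rule tree_Helly[OF tree])
    fix Y assume "Y \<in> ?T ` \<X>"
    then obtain X where X: "X \<in> \<X>" "Y = ?T X"
      by blast
    then have "X \<subseteq> V" "connected_in E X"
      using bramble by auto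
    obtain v where "v \<in> X"
      using bramble[OF X(1)] by blast
    then have "Y \<noteq> {}"
      using cover \<open>X \<subseteq> V\<close> X(2) by blast
    then show "Y \<subseteq> N \<and> Y \<noteq> {} \<and> connected_in F Y"
      using tree_decomposition_connected_preimage[OF TD \<open>X \<subseteq> V\<close> \<open>connected_in E X\<close>] X(2)
      by auto
  next
    fix Y Y' assume "Y \<in> ?T ` \<X>" "Y' \<in> ?T ` \<X>"
    then obtain X X' where X: "X \<in> \<X>" "Y = ?T X" "X' \<in> \<X>" "Y' = ?T X'"
      by blast
    obtain v where "v \<in> X" "v \<in> X'"
      using meet[OF X(1,3)] by blast
    moreover have "v \<in> V"
      using bramble[OF X(1)] \<open>v \<in> X\<close> by blast
    ultimately show "Y \<inter> Y' \<noteq> {}"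
      using cover X(2,4) by blast
  qed
  then show ?thesis
    by auto
qed

lemma treewidth_geI:
  assumes "simple_graph V E"
    and "\<And>N F B. tree_decomposition V E N F B \<Longrightarrow> \<exists>t\<in>N. n \<le> card (B t)"
  shows "n - 1 \<le> treewidth V E"
proof -
  let ?W = "{w. \<exists>N F B. tree_decomposition V E N F B \<and> decomposition_width N B = w}"
  have "tree_decomposition V E {0} {} (\<lambda>_. V)"
    using assms(1) unfolding tree_decomposition_def is_tree_def simple_graph_def connected_in_def
    by auto
  then have "?W \<noteq> {}"
    by blast
  have bounded: "w \<le> card V" and lower: "n - 1 \<le> w" if "w \<in> ?W" for w
  proof -
    obtain N F B where TD: "tree_decomposition V E N F B" and w: "decomposition_width N B = w"
      using \<open>w \<in> ?W\<close> by blast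
    then have "finite N" "N \<noteq> {}" "\<forall>t\<in>N. B t \<subseteq> V"
      unfolding tree_decomposition_def is_tree_def simple_graph_def by auto
    moreover have "finite V"
      using assms(1) unfolding simple_graph_def by simp
    ultimately have "Max ((\<lambda>t. card (B t)) ` N) \<le> card V"
      by (simp add: card_mono)
    then show "w \<le> card V"
      using w unfolding decomposition_width_def by simp
    obtain t where "t \<in> N" "n \<le> card (B t)"
      using assms(2)[OF TD] by blast
    then have "n \<le> Max ((\<lambda>t. card (B t)) ` N)"
      using \<open>finite N\<close> by (intro le_trans[OF _ Max_ge]) auto
    then show "n - 1 \<le> w"
      using w unfolding decomposition_width_def by simp
  qed
  have "finite ?W"
    using bounded by (meson finite_nat_set_iff_bounded_le)
  then have "Min ?W \<in> ?W"
    using \<open>?W \<noteq> {}\<close> by (rule Min_in)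
  then show ?thesis
    unfolding treewidth_def by (rule lower)
qed

lemma card_ge_if_meets_disjoint_family:
  assumes "finite B" "disjoint_family_on S {..<n}" "\<And>i. i < n \<Longrightarrow> B \<inter> S i \<noteq> {}"
  shows "n \<le> card B"
proof -
  define f where "f i = (SOME x. x \<in> B \<inter> S i)" for i
  have f: "f i \<in> B \<inter> S i" if "i < n" for i
    unfolding f_def by (rule someI_ex) (use assms(3)[OF that] in blast)
  then have "inj_on f {..<n}"
    using assms(2) unfolding inj_on_def disjoint_family_on_def by (metis IntD2 disjoint_iff lessThan_iff)
  then show ?thesis
    using card_inj_on_le[of f "{..<n}" B] f assms(1) by auto
qed

lemma tree_decomposition_bag_meets_crossing_families:
  assumes TD: "tree_decomposition V E N F B"
    and R: "\<And>i. i < n \<Longrightarrow> R i \<subseteq> V \<and> connected_in E (R i)"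
    and C: "\<And>j. j < n \<Longrightarrow> C j \<subseteq> V \<and> connected_in E (C j)"
    and meet: "\<And>i j. i < n \<Longrightarrow> j < n \<Longrightarrow> R i \<inter> C j \<noteq> {}"
  shows "\<exists>t\<in>N. \<forall>i<n. \<forall>j<n. B t \<inter> (R i \<union> C j) \<noteq> {}"
proof -
  let ?\<X> = "{R i \<union> C j | i j. i < n \<and> j < n}"
  have "\<exists>t\<in>N. \<forall>X\<in>?\<X>. B t \<inter> X \<noteq> {}"
  proof (rule tree_decomposition_bag_meets_bramble[OF TD])
    fix X assume "X \<in> ?\<X>"
    then obtain i j where ij: "i < n" "j < n" "X = R i \<union> C j"
      by blast
    have "connected_in E (R i \<union> C j)"
      using R[OF ij(1)] C[OF ij(2)] meet[OF ij(1,2)] by (intro connected_in_Un) auto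
    then show "X \<subseteq> V \<and> X \<noteq> {} \<and> connected_in E X"
      using R[OF ij(1)] C[OF ij(2)] meet[OF ij(1,2)] ij(3) by auto
  next
    fix X Y assume "X \<in> ?\<X>" "Y \<in> ?\<X>"
    then obtain i j i' j' where "i < n" "X = R i \<union> C j" "j' < n" "Y = R i' \<union> C j'"
      by blast
    then show "X \<inter> Y \<noteq> {}"
      using meet[of i j'] by blast
  qed
  then obtain t where t: "t \<in> N" "\<forall>X\<in>?\<X>. B t \<inter> X \<noteq> {}"
    by blast
  have "B t \<inter> (R i \<union> C j) \<noteq> {}" if "i < n" "j < n" for i j
  proof -
    have "R i \<union> C j \<in> ?\<X>"
      using that by blast
    then show ?thesis
      using t(2) by blast
  qed
  then show ?thesis
    using t(1) by blast
qed

text \<open>A bag meeting every R i \<union> C j meets every R i or every C j; disjointness then forces n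
  vertices into it.\<close>
lemma treewidth_ge_crossing_families:
  assumes "simple_graph V E"
    and R: "\<And>i. i < n \<Longrightarrow> R i \<subseteq> V \<and> connected_in E (R i)" "disjoint_family_on R {..<n}"
    and C: "\<And>j. j < n \<Longrightarrow> C j \<subseteq> V \<and> connected_in E (C j)" "disjoint_family_on C {..<n}"
    and meet: "\<And>i j. i < n \<Longrightarrow> j < n \<Longrightarrow> R i \<inter> C j \<noteq> {}"
  shows "n - 1 \<le> treewidth V E"
proof (rule treewidth_geI[OF assms(1)])
  fix N F B
  assume TD: "tree_decomposition V E N F B"
  have "\<exists>t\<in>N. \<forall>i<n. \<forall>j<n. B t \<inter> (R i \<union> C j) \<noteq> {}"
    using TD R(1) C(1) meet by (rule tree_decomposition_bag_meets_crossing_families)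
  then obtain t where t: "t \<in> N" "\<forall>i<n. \<forall>j<n. B t \<inter> (R i \<union> C j) \<noteq> {}"
    by blast
  have "finite (B t)"
  proof (rule finite_subset)
    show "B t \<subseteq> V"
      using TD t(1) unfolding tree_decomposition_def by blast
    show "finite V"
      using assms(1) unfolding simple_graph_def by blast
  qed
  have "n \<le> card (B t)"
  proof (rule ccontr)
    assume small: "\<not> n \<le> card (B t)"
    have misses: "\<exists>i<n. B t \<inter> S i = {}" if "disjoint_family_on S {..<n}" for S
    proof (rule ccontr)
      assume "\<not> ?thesis"
      then have "n \<le> card (B t)"
        by (intro card_ge_if_meets_disjoint_family[OF \<open>finite (B t)\<close> that]) auto
      then show False
        using small by simp
    qed
    obtain i where "i < n" "B t \<inter> R i = {}"
      using misses[OF R(2)] by blast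
    moreover obtain j where "j < n" "B t \<inter> C j = {}"
      using misses[OF C(2)] by blast
    moreover have "B t \<inter> (R i \<union> C j) \<noteq> {}"
      using t(2) \<open>i < n\<close> \<open>j < n\<close> by blast
    ultimately show False
      by blast
  qed
  then show "\<exists>t\<in>N. n \<le> card (B t)"
    using t(1) by blast
qed

lemma adj_rel_relpow_sym: "(u, v) \<in> adj_rel E ^^ n \<Longrightarrow> (v, u) \<in> adj_rel E ^^ n"
proof (induction n arbitrary: v)
  case 0
  then show ?case
    by simp
next
  case (Suc n)
  from Suc.prems obtain w where "(u, w) \<in> adj_rel E ^^ n" "(w, v) \<in> adj_rel E"
    by (rule relpow_Suc_E)
  then have "(v, w) \<in> adj_rel E" "(w, u) \<in> adj_rel E ^^ n"
    using Suc.IH by (auto simp: insert_commute)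
  then show ?case
    by (rule relpow_Suc_I2)
qed

lemma graph_dist_le_relpow: "(u, v) \<in> adj_rel E ^^ n \<Longrightarrow> graph_dist E u v \<le> enat n"
  unfolding graph_dist_def by (rule INF_lower) simp

lemma radius_le_if_walks:
  assumes "c \<in> V" and "\<And>w. w \<in> V \<Longrightarrow> \<exists>n \<le> r. (c, w) \<in> adj_rel E ^^ n"
  shows "radius V E \<le> enat r"
proof -
  have "radius V E \<le> eccentricity V E c"
    unfolding radius_def using assms(1) by (rule INF_lower)
  also have "\<dots> \<le> enat r"
    unfolding eccentricity_def
  proof (rule SUP_least)
    fix w assume "w \<in> V"
    then obtain n where "n \<le> r" "(c, w) \<in> adj_rel E ^^ n"
      using assms(2) by blast
    then show "graph_dist E c w \<le> enat r"
      using graph_dist_le_relpow[OF \<open>(c, w) \<in> adj_rel E ^^ n\<close>] by (simp add: order_trans)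
  qed
  finally show ?thesis .
qed

definition binary_tree_nodes :: "nat \<Rightarrow> (nat \<Rightarrow> nat \<Rightarrow> 'a) \<Rightarrow> 'a set" where
  "binary_tree_nodes h f = {f t a | t a. t \<le> h \<and> a < 2 ^ (h - t)}"

definition binary_tree_edges :: "nat \<Rightarrow> (nat \<Rightarrow> nat \<Rightarrow> 'a) \<Rightarrow> 'a set set" where
  "binary_tree_edges h f = {{f (Suc t) (b div 2), f t b} | t b. t < h \<and> b < 2 ^ (h - t)}"

lemma binary_tree_parent_index: "t < h \<Longrightarrow> (b::nat) < 2 ^ (h - t) \<Longrightarrow> b div 2 < 2 ^ (h - Suc t)"
  by (simp add: Suc_diff_Suc[symmetric] div_less_iff_less_mult)

lemma binary_tree_edge_subset: "e \<in> binary_tree_edges h f \<Longrightarrow> e \<subseteq> binary_tree_nodes h f"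
proof -
  assume "e \<in> binary_tree_edges h f"
  then obtain t b where e: "e = {f (Suc t) (b div 2), f t b}" "t < h" "b < 2 ^ (h - t)"
    unfolding binary_tree_edges_def by blast
  then have "f (Suc t) (b div 2) \<in> binary_tree_nodes h f"
    using binary_tree_parent_index[OF e(2,3)] unfolding binary_tree_nodes_def by force
  moreover have "f t b \<in> binary_tree_nodes h f"
    using e(2,3) unfolding binary_tree_nodes_def by force
  ultimately show ?thesis
    using e(1) by blast
qed

lemma binary_tree_root_walk:
  assumes "binary_tree_edges h f \<subseteq> E" "t \<le> h" "a < 2 ^ (h - t)"
  shows "(f h 0, f t a) \<in> adj_rel E ^^ (h - t)"
  using assms(2,3)
proof (induction "h - t" arbitrary: t a)
  case 0
  then show ?case
    by simp
next
  case (Suc d)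
  then have "t < h" "d = h - Suc t"
    by auto
  then have "(f h 0, f (Suc t) (a div 2)) \<in> adj_rel E ^^ d"
    using Suc.hyps(1)[of "Suc t" "a div 2"] binary_tree_parent_index[OF \<open>t < h\<close> Suc.prems(2)]
    by simp
  moreover have "{f (Suc t) (a div 2), f t a} \<in> E"
    using assms(1) \<open>t < h\<close> Suc.prems(2) unfolding binary_tree_edges_def by blast
  ultimately have "(f h 0, f t a) \<in> adj_rel E ^^ Suc d"
    by (intro relpow_Suc_I) auto
  then show ?case
    using Suc.hyps(2) by simp
qed

lemma connected_binary_tree:
  assumes "binary_tree_edges h f \<subseteq> E"
  shows "connected_in E (binary_tree_nodes h f)"
proof -
  let ?T = "binary_tree_edges h f" and ?N = "binary_tree_nodes h f"
  have "connected_in ?T ?N"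
  proof (rule connected_inI_hub)
    show "f h 0 \<in> ?N"
      unfolding binary_tree_nodes_def by force
    fix u assume "u \<in> ?N"
    then obtain t a where u: "u = f t a" "t \<le> h" "a < 2 ^ (h - t)"
      unfolding binary_tree_nodes_def by blast
    have "?T \<subseteq> {e \<in> ?T. e \<subseteq> ?N}"
      using binary_tree_edge_subset by blast
    then have "(f h 0, u) \<in> induced_adj ?T ?N ^^ (h - t)"
      unfolding u(1) using u(2,3) by (rule binary_tree_root_walk)
    then show "(f h 0, u) \<in> (induced_adj ?T ?N)\<^sup>*"
      by (rule relpow_imp_rtrancl)
  qed
  then show ?thesis
    using assms by (rule connected_in_mono_edges[rotated])
qed

lemma finite_binary_tree_nodes: "finite (binary_tree_nodes h f)"
proof (rule finite_subset)
  show "binary_tree_nodes h f \<subseteq> (\<lambda>(t, a). f t a) ` (SIGMA t:{..h}. {..<2 ^ (h - t)})"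
    unfolding binary_tree_nodes_def by force
qed simp

definition path_nodes :: "nat \<Rightarrow> (nat \<Rightarrow> 'a) \<Rightarrow> 'a set" where
  "path_nodes n g = g ` {..n}"

definition path_edges :: "nat \<Rightarrow> (nat \<Rightarrow> 'a) \<Rightarrow> 'a set set" where
  "path_edges n g = {{g y, g (Suc y)} | y. y < n}"

lemma path_edge_subset: "e \<in> path_edges n g \<Longrightarrow> e \<subseteq> path_nodes n g"
  unfolding path_edges_def path_nodes_def by auto

lemma path_walk:
  assumes "path_edges n g \<subseteq> E" "y + s \<le> n"
  shows "(g y, g (y + s)) \<in> adj_rel E ^^ s"
  using assms(2)
proof (induction s)
  case 0
  then show ?case
    by simp
next
  case (Suc s)
  have "{g (y + s), g (Suc (y + s))} \<in> E"
    using assms(1) Suc.prems unfolding path_edges_def by force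
  then show ?case
    using Suc by (intro relpow_Suc_I) auto
qed

lemma connected_path:
  assumes "path_edges n g \<subseteq> E"
  shows "connected_in E (path_nodes n g)"
proof -
  let ?P = "path_edges n g" and ?N = "path_nodes n g"
  have "connected_in ?P ?N"
  proof (rule connected_inI_hub)
    show "g 0 \<in> ?N"
      unfolding path_nodes_def by simp
    fix u assume "u \<in> ?N"
    then obtain y where u: "u = g y" "y \<le> n"
      unfolding path_nodes_def by blast
    have "?P \<subseteq> {e \<in> ?P. e \<subseteq> ?N}"
      using path_edge_subset by blast
    then have "(g 0, g y) \<in> induced_adj ?P ?N ^^ y"
      using path_walk[of n g _ 0 y] u(2) by simp
    then show "(g 0, u) \<in> (induced_adj ?P ?N)\<^sup>*"
      unfolding u(1) by (rule relpow_imp_rtrancl)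
  qed
  then show ?thesis
    using assms by (rule connected_in_mono_edges[rotated])
qed

definition straight_drawing :: "('a::linorder \<Rightarrow> real \<times> real) \<Rightarrow> 'a set \<Rightarrow> real \<Rightarrow> real \<times> real" where
  "straight_drawing pos e = linepath (pos (Min e)) (pos (Max e))"

definition straight_interior :: "('a::linorder \<Rightarrow> real \<times> real) \<Rightarrow> 'a set \<Rightarrow> (real \<times> real) set" where
  "straight_interior pos e = path_image (straight_drawing pos e) - pos ` e"

lemma straight_drawing_ordered: "u < v \<Longrightarrow> straight_drawing pos {u, v} = linepath (pos u) (pos v)"
  unfolding straight_drawing_def by simp

lemma path_image_straight_drawing:
  "path_image (straight_drawing pos {u, v}) = closed_segment (pos u) (pos v)"
proof (cases u v rule: linorder_cases)
  case less
  then show ?thesis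
    by (simp add: straight_drawing_ordered)
next
  case equal
  then show ?thesis
    by (simp add: straight_drawing_def)
next
  case greater
  then have "straight_drawing pos {u, v} = linepath (pos v) (pos u)"
    using straight_drawing_ordered[of v u pos] by (simp add: insert_commute)
  then show ?thesis
    by (simp add: closed_segment_commute)
qed

lemma straight_interior_doubleton_eq: "straight_interior pos {u, v} = open_segment (pos u) (pos v)"
  unfolding straight_interior_def open_segment_def path_image_straight_drawing by simp

lemma crossings_straight_drawing:
  "crossings V E pos (straight_drawing pos) =
     {(p, {e1, e2}) | p e1 e2. e1 \<in> E \<and> e2 \<in> E \<and> e1 \<noteq> e2 \<and>
        p \<in> straight_interior pos e1 \<and> p \<in> straight_interior pos e2}"
  unfolding crossings_def straight_interior_def image_Un by blast

lemma valid_straight_drawing: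
  assumes "simple_graph V E" "inj_on pos V"
    and "\<And>u v w. {u, v} \<in> E \<Longrightarrow> w \<in> V \<Longrightarrow> pos w \<notin> open_segment (pos u) (pos v)"
  shows "valid_drawing V E pos (straight_drawing pos)"
  unfolding valid_drawing_def
proof (intro conjI ballI)
  fix e assume "e \<in> E"
  then have "e \<subseteq> V" "card e = 2"
    using assms(1) unfolding simple_graph_def by auto
  then obtain u v where e: "e = {u, v}" "u < v"
    unfolding card_2_iff by (metis insert_commute linorder_neq_iff)
  with \<open>e \<subseteq> V\<close> have "pos u \<noteq> pos v"
    using assms(2) by (auto dest: inj_onD)
  then show "arc (straight_drawing pos e)"
    unfolding e straight_drawing_ordered[OF e(2)] by (rule arc_linepath)
  show "\<exists>u v. e = {u, v} \<and> pathstart (straight_drawing pos e) = pos u \<and>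
      pathfinish (straight_drawing pos e) = pos v"
    using e straight_drawing_ordered[OF e(2)] by auto
  fix w assume "w \<in> V"
  show "pos w \<in> path_image (straight_drawing pos e) \<longrightarrow> w \<in> e"
  proof
    assume "pos w \<in> path_image (straight_drawing pos e)"
    then have "pos w \<in> {pos u, pos v}"
      using assms(3)[of u v w] \<open>e \<in> E\<close> \<open>w \<in> V\<close>
      unfolding e path_image_straight_drawing closed_segment_eq_open by blast
    then show "w \<in> e"
      using assms(2) \<open>w \<in> V\<close> \<open>e \<subseteq> V\<close> unfolding e by (auto dest: inj_onD)
  qed
qed (use assms(2) in simp)

lemma k_gap_planar_drawingI:
  assumes "valid_drawing V E pos curve"
    and "\<And>x. x \<in> crossings V E pos curve \<Longrightarrow> snd x \<inter> D \<noteq> {}"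
    and "\<And>e. e \<in> D \<Longrightarrow>
      finite {x \<in> crossings V E pos curve. e \<in> snd x} \<and> card {x \<in> crossings V E pos curve. e \<in> snd x} \<le> k"
  shows "k_gap_planar_drawing k V E pos curve"
proof -
  let ?C = "crossings V E pos curve"
  define charge where "charge x = (SOME e. e \<in> snd x \<inter> D)"
    for x :: "(real \<times> real) \<times> 'a set set"
  have charge: "charge x \<in> snd x \<inter> D" if "x \<in> ?C" for x
    unfolding charge_def by (rule someI_ex) (use assms(2)[OF that] in blast)
  have "finite {x \<in> ?C. charge x = e} \<and> card {x \<in> ?C. charge x = e} \<le> k" for e
  proof (cases "e \<in> D")
    case True
    have "{x \<in> ?C. charge x = e} \<subseteq> {x \<in> ?C. e \<in> snd x}"
      using charge by auto
    then show ?thesis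
      using assms(3)[OF True] by (meson card_mono finite_subset le_trans)
  next
    case False
    then have empty: "{x \<in> ?C. charge x = e} = {}"
      using charge by auto
    show ?thesis
      unfolding empty by simp
  qed
  then show ?thesis
    unfolding k_gap_planar_drawing_def using assms(1) charge by blast
qed

definition lattice_vertex :: "int \<Rightarrow> int \<Rightarrow> nat" where
  "lattice_vertex x y = prod_encode (int_encode x, int_encode y)"

definition lattice_pos :: "nat \<Rightarrow> real \<times> real" where
  "lattice_pos v = (case prod_decode v of (x, y) \<Rightarrow> (of_int (int_decode x), of_int (int_decode y)))"

lemma lattice_pos_vertex [simp]: "lattice_pos (lattice_vertex x y) = (of_int x, of_int y)"
  unfolding lattice_pos_def lattice_vertex_def by simp

lemma lattice_vertex_eq_iff [simp]: "lattice_vertex x y = lattice_vertex x' y' \<longleftrightarrow> x = x' \<and> y = y'"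
  unfolding lattice_vertex_def by (simp add: int_encode_eq)

lemma inj_lattice_pos: "inj lattice_pos"
proof (rule injI)
  fix v w assume "lattice_pos v = lattice_pos w"
  then have "prod_decode v = prod_decode w"
    unfolding lattice_pos_def
    by (cases "prod_decode v", cases "prod_decode w") (simp add: int_decode_eq)
  then show "v = w"
    by (metis prod_decode_inverse)
qed

lemma open_segment_fst:
  fixes a b p :: "real \<times> real"
  assumes "p \<in> open_segment a b" "fst a \<noteq> fst b"
  shows "fst p \<in> open_segment (fst a) (fst b)"
  using assms open_segment_PairD[of "fst p" "snd p" "fst a" "snd a" "fst b" "snd b"] by simp

lemma open_segment_snd:
  fixes a b p :: "real \<times> real"
  assumes "p \<in> open_segment a b" "snd a \<noteq> snd b"
  shows "snd p \<in> open_segment (snd a) (snd b)"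
  using assms open_segment_PairD[of "fst p" "snd p" "fst a" "snd a" "fst b" "snd b"] by simp

lemma open_segment_fst_const:
  fixes a b p :: "real \<times> real"
  assumes "p \<in> open_segment a b" "fst a = fst b"
  shows "fst p = fst a"
proof -
  obtain u where "p = (1 - u) *\<^sub>R a + u *\<^sub>R b"
    using assms(1) unfolding in_segment by blast
  then have "fst p = (1 - u) * fst a + u * fst b"
    by simp
  then show ?thesis
    using assms(2) by (simp add: algebra_simps)
qed

lemma open_segment_eq_if_fst_eq:
  fixes a b p q :: "real \<times> real"
  assumes "p \<in> open_segment a b" "q \<in> open_segment a b" "fst a \<noteq> fst b" "fst p = fst q"
  shows "p = q"
proof -
  obtain u v where uv: "p = (1 - u) *\<^sub>R a + u *\<^sub>R b" "q = (1 - v) *\<^sub>R a + v *\<^sub>R b"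
    using assms(1,2) unfolding in_segment by blast
  then have "fst p = (1 - u) * fst a + u * fst b" "fst q = (1 - v) * fst a + v * fst b"
    by simp_all
  then have "u * (fst b - fst a) = v * (fst b - fst a)"
    using assms(4) by (simp add: algebra_simps)
  then have "u = v"
    using assms(3) by simp
  then show ?thesis
    using uv by simp
qed

lemma open_segment_real_bounds:
  fixes x a b lo hi :: real
  assumes "x \<in> open_segment a b" "lo \<le> a" "a \<le> hi" "lo \<le> b" "b \<le> hi"
  shows "lo < x \<and> x < hi"
  using assms by (auto simp: open_segment_eq_real_ivl split: if_splits)

lemma open_segment_unit_interval:
  fixes x :: real
  assumes "x \<in> open_segment (of_int k) (of_int (k + 1))"
  shows "\<lfloor>x\<rfloor> = k \<and> x \<notin> \<int>"
proof -
  have x: "of_int k < x" "x < of_int k + 1"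
    using open_segment_real_bounds[OF assms, of "of_int k" "of_int k + 1"] by simp_all
  then have "\<lfloor>x\<rfloor> = k"
    by (intro floor_unique) simp_all
  moreover have "x \<notin> \<int>"
  proof
    assume "x \<in> \<int>"
    then obtain z where "x = of_int z"
      by (rule Ints_cases)
    with x show False
      by simp
  qed
  ultimately show ?thesis
    by blast
qed

lemma open_segment_divide:
  fixes z a b c :: real
  assumes "0 < c" "z \<in> open_segment (c * a) (c * b)"
  shows "z / c \<in> open_segment a b"
  using assms by (auto simp: open_segment_eq_real_ivl field_simps split: if_splits)

section \<open>The tree grid\<close>

lemma mult_add_less_inject:
  fixes d i i' t t' :: nat
  assumes "t < d" "t' < d" "d * i + t = d * i' + t'"
  shows "i = i' \<and> t = t'"
proof -
  have "(d * i + t) div d = i" "(d * i' + t') div d = i'"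
    using assms(1,2) by simp_all
  then have "i = i'"
    using assms(3) by metis
  then show ?thesis
    using assms(3) by simp
qed

text \<open>In a complete binary tree whose leaves have height 0, node a at height t has in-order
  rank (2a + 1) 2^t - 1. Row tree i puts this node at (rank, 2mi + t); the spine puts it at
  (-t, m * rank), so that spine leaf i is the first leaf (0, 2mi) of row i; column j is the
  vertical path through the points (2j, y), which contains leaf j of every row.\<close>
definition inorder_rank :: "nat \<Rightarrow> nat \<Rightarrow> int" where
  "inorder_rank t a = (2 * int a + 1) * 2 ^ t - 1"

definition row_node :: "nat \<Rightarrow> nat \<Rightarrow> nat \<Rightarrow> nat \<Rightarrow> nat" where
  "row_node m i t a = lattice_vertex (inorder_rank t a) (int (2 * m * i + t))"

definition spine_node :: "nat \<Rightarrow> nat \<Rightarrow> nat \<Rightarrow> nat" where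
  "spine_node m t a = lattice_vertex (- int t) (int m * inorder_rank t a)"

definition column_node :: "nat \<Rightarrow> nat \<Rightarrow> nat" where
  "column_node j y = lattice_vertex (2 * int j) (int y)"

definition column_height :: "nat \<Rightarrow> nat" where
  "column_height m = 2 * m * (2 ^ m - 1)"

definition row_edges :: "nat \<Rightarrow> nat set set" where
  "row_edges m = (\<Union>i<2 ^ m. binary_tree_edges m (row_node m i))"

definition spine_edges :: "nat \<Rightarrow> nat set set" where
  "spine_edges m = binary_tree_edges m (spine_node m)"

definition column_edges :: "nat \<Rightarrow> nat set set" where
  "column_edges m = (\<Union>j<2 ^ m. path_edges (column_height m) (column_node j))"

definition tree_grid_vertices :: "nat \<Rightarrow> nat set" where
  "tree_grid_vertices m = binary_tree_nodes m (spine_node m) \<union>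
     (\<Union>i<2 ^ m. binary_tree_nodes m (row_node m i)) \<union>
     (\<Union>j<2 ^ m. path_nodes (column_height m) (column_node j))"

definition tree_grid_edges :: "nat \<Rightarrow> nat set set" where
  "tree_grid_edges m = row_edges m \<union> spine_edges m \<union> column_edges m"

lemma row_edgeE:
  assumes "e \<in> row_edges m"
  obtains i t b where "i < 2 ^ m" "t < m" "b < 2 ^ (m - t)"
    "e = {row_node m i (Suc t) (b div 2), row_node m i t b}"
  using assms unfolding row_edges_def binary_tree_edges_def by blast

lemma spine_edgeE:
  assumes "e \<in> spine_edges m"
  obtains t b where "t < m" "b < 2 ^ (m - t)" "e = {spine_node m (Suc t) (b div 2), spine_node m t b}"
  using assms unfolding spine_edges_def binary_tree_edges_def by blast

lemma column_edgeE:
  assumes "e \<in> column_edges m"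
  obtains j y where "j < 2 ^ m" "y < column_height m" "e = {column_node j y, column_node j (Suc y)}"
  using assms unfolding column_edges_def path_edges_def by blast

lemma spine_leaf_eq_row_leaf: "spine_node m 0 i = row_node m i 0 0"
  unfolding spine_node_def row_node_def inorder_rank_def by simp

lemma row_leaf_eq_column_node: "row_node m i 0 j = column_node j (2 * m * i)"
  unfolding row_node_def column_node_def inorder_rank_def by simp

lemma row_node_eq_imp_row_eq:
  assumes "row_node m i t a = row_node m i' t' a'" "t \<le> m" "t' \<le> m" "0 < m"
  shows "i = i'"
proof -
  have "2 * m * i + t = 2 * m * i' + t'"
    using assms(1) unfolding row_node_def lattice_vertex_eq_iff of_nat_eq_iff by blast
  moreover have "t < 2 * m" "t' < 2 * m"
    using assms(2-4) by linarith+
  ultimately show ?thesis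
    using mult_add_less_inject by blast
qed

lemma column_node_eq_imp_column_eq: "column_node j y = column_node j' y' \<Longrightarrow> j = j'"
  unfolding column_node_def by simp

lemma tree_grid_edge_subset: "e \<in> tree_grid_edges m \<Longrightarrow> e \<subseteq> tree_grid_vertices m"
proof -
  assume "e \<in> tree_grid_edges m"
  then consider "e \<in> spine_edges m"
    | i where "i < 2 ^ m" "e \<in> binary_tree_edges m (row_node m i)"
    | j where "j < 2 ^ m" "e \<in> path_edges (column_height m) (column_node j)"
    unfolding tree_grid_edges_def row_edges_def column_edges_def by blast
  then show ?thesis
  proof cases
    case 1
    then show ?thesis
      using binary_tree_edge_subset unfolding spine_edges_def tree_grid_vertices_def by blast
  next
    case (2 i)
    then have "binary_tree_nodes m (row_node m i) \<subseteq> tree_grid_vertices m"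
      unfolding tree_grid_vertices_def by blast
    then show ?thesis
      using binary_tree_edge_subset[OF 2(2)] by blast
  next
    case (3 j)
    then have "path_nodes (column_height m) (column_node j) \<subseteq> tree_grid_vertices m"
      unfolding tree_grid_vertices_def by blast
    then show ?thesis
      using path_edge_subset[OF 3(2)] by blast
  qed
qed

lemma simple_graph_tree_grid: "simple_graph (tree_grid_vertices m) (tree_grid_edges m)"
  unfolding simple_graph_def
proof (intro conjI ballI)
  show "finite (tree_grid_vertices m)"
    unfolding tree_grid_vertices_def path_nodes_def by (simp add: finite_binary_tree_nodes)
  fix e assume e: "e \<in> tree_grid_edges m"
  then show "e \<subseteq> tree_grid_vertices m"
    by (rule tree_grid_edge_subset)
  from e consider "e \<in> row_edges m" | "e \<in> spine_edges m" | "e \<in> column_edges m"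
    unfolding tree_grid_edges_def by blast
  then show "card e = 2"
  proof cases
    case 1
    then show ?thesis
      by (rule row_edgeE) (simp add: row_node_def)
  next
    case 2
    then show ?thesis
      by (rule spine_edgeE) (simp add: spine_node_def)
  next
    case 3
    then show ?thesis
      by (rule column_edgeE) (simp add: column_node_def)
  qed
qed

lemma subset_tree_grid_edges:
  "spine_edges m \<subseteq> tree_grid_edges m"
  "i < 2 ^ m \<Longrightarrow> binary_tree_edges m (row_node m i) \<subseteq> tree_grid_edges m"
  "j < 2 ^ m \<Longrightarrow> path_edges (column_height m) (column_node j) \<subseteq> tree_grid_edges m"
  unfolding tree_grid_edges_def row_edges_def column_edges_def by blast+

lemma row_index_less: "0 < m \<Longrightarrow> y \<le> column_height m \<Longrightarrow> y div (2 * m) < 2 ^ m"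
proof -
  assume "0 < m" "y \<le> column_height m"
  then have "y div (2 * m) \<le> (2 * m * (2 ^ m - 1)) div (2 * m)"
    unfolding column_height_def by (intro div_le_mono) simp
  also have "\<dots> = 2 ^ m - 1"
    using \<open>0 < m\<close> by simp
  finally show ?thesis
    by (metis One_nat_def Suc_pred le_imp_less_Suc pos2 zero_less_power)
qed

lemma tree_grid_walk_to_row:
  assumes "i < 2 ^ m" "t \<le> m" "a < 2 ^ (m - t)"
  shows "(spine_node m m 0, row_node m i t a) \<in> adj_rel (tree_grid_edges m) ^^ (m + m + (m - t))"
proof -
  let ?R = "adj_rel (tree_grid_edges m)"
  have row_walk: "(row_node m i m 0, row_node m i t a) \<in> ?R ^^ (m - t)" if "t \<le> m" "a < 2 ^ (m - t)" for t a
    using binary_tree_root_walk[OF subset_tree_grid_edges(2)[OF assms(1)] that] .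
  have "(spine_node m m 0, spine_node m 0 i) \<in> ?R ^^ m"
    using binary_tree_root_walk[OF subset_tree_grid_edges(1)[unfolded spine_edges_def],
        where t = 0 and a = i] assms(1)
    by simp
  then have "(spine_node m m 0, row_node m i 0 0) \<in> ?R ^^ m"
    by (simp add: spine_leaf_eq_row_leaf)
  moreover have "(row_node m i 0 0, row_node m i m 0) \<in> ?R ^^ m"
    using adj_rel_relpow_sym row_walk[of 0 0] by simp
  ultimately show ?thesis
    using row_walk[OF assms(2,3)] by (intro relpow_trans)
qed

text \<open>Every vertex is within distance 5m of the root of the spine: down the spine, up and down a
  row tree, and at most 2m - 1 steps along a column.\<close>
lemma tree_grid_radius:
  assumes "0 < m"
  shows "radius (tree_grid_vertices m) (tree_grid_edges m) \<le> enat (5 * m)"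
proof (rule radius_le_if_walks)
  let ?R = "adj_rel (tree_grid_edges m)"
  let ?c = "spine_node m m 0"
  show "?c \<in> tree_grid_vertices m"
    unfolding tree_grid_vertices_def binary_tree_nodes_def by force
  fix w assume "w \<in> tree_grid_vertices m"
  then consider t a where "w = spine_node m t a" "t \<le> m" "a < 2 ^ (m - t)"
    | i t a where "w = row_node m i t a" "i < 2 ^ m" "t \<le> m" "a < 2 ^ (m - t)"
    | j y where "w = column_node j y" "j < 2 ^ m" "y \<le> column_height m"
    unfolding tree_grid_vertices_def binary_tree_nodes_def path_nodes_def by blast
  then show "\<exists>n \<le> 5 * m. (?c, w) \<in> ?R ^^ n"
  proof cases
    case 1
    then show ?thesis
      using binary_tree_root_walk[OF subset_tree_grid_edges(1)[unfolded spine_edges_def] 1(2,3)]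
      by (intro exI[of _ "m - t"]) simp
  next
    case 2
    then show ?thesis
      using tree_grid_walk_to_row[OF 2(2-4)] by (intro exI[of _ "m + m + (m - t)"]) simp
  next
    case (3 j y)
    define i s where "i = y div (2 * m)" and "s = y mod (2 * m)"
    have "y = 2 * m * i + s" "s < 2 * m" "i < 2 ^ m"
      unfolding i_def s_def using assms row_index_less[OF assms 3(3)] by simp_all
    have "(?c, column_node j (2 * m * i)) \<in> ?R ^^ (m + m + m)"
      using tree_grid_walk_to_row[of i m 0 j] \<open>i < 2 ^ m\<close> 3(2) by (simp add: row_leaf_eq_column_node)
    moreover have "(column_node j (2 * m * i), column_node j (2 * m * i + s)) \<in> ?R ^^ s"
      using path_walk[OF subset_tree_grid_edges(3)[OF 3(2)]] 3(3) \<open>y = 2 * m * i + s\<close> by simp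
    ultimately have "(?c, w) \<in> ?R ^^ (m + m + m + s)"
      unfolding 3(1) \<open>y = 2 * m * i + s\<close> by (rule relpow_trans)
    then show ?thesis
      using \<open>s < 2 * m\<close> by (intro exI[of _ "m + m + m + s"]) simp
  qed
qed

text \<open>Row i and column j meet in the j-th leaf of row i.\<close>
lemma tree_grid_treewidth:
  assumes "0 < m"
  shows "2 ^ m - 1 \<le> treewidth (tree_grid_vertices m) (tree_grid_edges m)"
proof (rule treewidth_ge_crossing_families[OF simple_graph_tree_grid])
  let ?R = "\<lambda>i. binary_tree_nodes m (row_node m i)"
  let ?C = "\<lambda>j. path_nodes (column_height m) (column_node j)"
  show "?R i \<subseteq> tree_grid_vertices m \<and> connected_in (tree_grid_edges m) (?R i)" if "i < 2 ^ m" for i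
    using that connected_binary_tree[OF subset_tree_grid_edges(2)[OF that]]
    unfolding tree_grid_vertices_def by blast
  show "?C j \<subseteq> tree_grid_vertices m \<and> connected_in (tree_grid_edges m) (?C j)" if "j < 2 ^ m" for j
    using that connected_path[OF subset_tree_grid_edges(3)[OF that]]
    unfolding tree_grid_vertices_def by blast
  show "disjoint_family_on ?R {..<2 ^ m}"
    unfolding disjoint_family_on_def binary_tree_nodes_def
    using row_node_eq_imp_row_eq[OF _ _ _ assms] by blast
  show "disjoint_family_on ?C {..<2 ^ m}"
    unfolding disjoint_family_on_def path_nodes_def using column_node_eq_imp_column_eq by blast
  show "?R i \<inter> ?C j \<noteq> {}" if "i < 2 ^ m" "j < 2 ^ m" for i j
  proof -
    have "row_node m i 0 j \<in> ?R i"
      using that(2) unfolding binary_tree_nodes_def by force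
    moreover have "i \<le> 2 ^ m - 1"
      using that(1) by linarith
    then have "2 * m * i \<le> column_height m"
      unfolding column_height_def by (rule mult_le_mono2)
    then have "row_node m i 0 j \<in> ?C j"
      unfolding row_leaf_eq_column_node path_nodes_def by simp
    ultimately show ?thesis
      by blast
  qed
qed

section \<open>Crossings of the tree grid\<close>

lemma inorder_rank_nonneg: "0 \<le> inorder_rank t a"
  unfolding inorder_rank_def by simp

lemma inorder_rank_parent_child:
  "int b * 2 ^ Suc t - 1 \<le> inorder_rank (Suc t) (b div 2)"
  "inorder_rank (Suc t) (b div 2) \<le> (int b + 1) * 2 ^ Suc t - 1"
  "int b * 2 ^ Suc t - 1 \<le> inorder_rank t b"
  "inorder_rank t b \<le> (int b + 1) * 2 ^ Suc t - 1"
  "inorder_rank (Suc t) (b div 2) \<noteq> inorder_rank t b"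
proof -
  define B T where "B = int (b div 2)" and "T = (2::int) ^ t"
  have "1 \<le> T"
    unfolding T_def by simp
  have parent: "inorder_rank (Suc t) (b div 2) = 4 * B * T + 2 * T - 1"
    and child: "inorder_rank t b = (2 * int b + 1) * T - 1" and two: "(2::int) ^ Suc t = 2 * T"
    unfolding inorder_rank_def B_def T_def by (simp_all add: algebra_simps)
  have "b = 2 * (b div 2) \<or> b = 2 * (b div 2) + 1"
    by presburger
  then have "int b = 2 * B \<or> int b = 2 * B + 1"
    unfolding B_def by linarith
  then show "int b * 2 ^ Suc t - 1 \<le> inorder_rank (Suc t) (b div 2)"
    "inorder_rank (Suc t) (b div 2) \<le> (int b + 1) * 2 ^ Suc t - 1"
    "int b * 2 ^ Suc t - 1 \<le> inorder_rank t b"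
    "inorder_rank t b \<le> (int b + 1) * 2 ^ Suc t - 1"
    "inorder_rank (Suc t) (b div 2) \<noteq> inorder_rank t b"
    unfolding parent child two using \<open>1 \<le> T\<close> by (auto simp: algebra_simps)
qed

lemma inorder_edge_interior:
  fixes x :: real
  assumes "x \<in> open_segment (of_int (inorder_rank (Suc t) (b div 2))) (of_int (inorder_rank t b))"
  shows "0 < x \<and> \<lfloor>(x + 1) / 2 ^ Suc t\<rfloor> = int b"
proof -
  note r = inorder_rank_parent_child[where b = b and t = t]
  have r': "of_int (int b * 2 ^ Suc t - 1) \<le> (of_int (inorder_rank (Suc t) (b div 2)) :: real)"
    "of_int (inorder_rank (Suc t) (b div 2)) \<le> (of_int ((int b + 1) * 2 ^ Suc t - 1) :: real)"
    "of_int (int b * 2 ^ Suc t - 1) \<le> (of_int (inorder_rank t b) :: real)"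
    "of_int (inorder_rank t b) \<le> (of_int ((int b + 1) * 2 ^ Suc t - 1) :: real)"
    "of_int 0 \<le> (of_int (inorder_rank (Suc t) (b div 2)) :: real)"
    "of_int 0 \<le> (of_int (inorder_rank t b) :: real)"
    using r inorder_rank_nonneg by (simp_all only: of_int_le_iff)
  have "of_int (int b * 2 ^ Suc t - 1) < x \<and> x < of_int ((int b + 1) * 2 ^ Suc t - 1)"
    using open_segment_real_bounds[OF assms r'(1-4)] .
  then have "real b \<le> (x + 1) / 2 ^ Suc t" "(x + 1) / 2 ^ Suc t < real b + 1"
    by (simp_all add: field_simps)
  then have "\<lfloor>(x + 1) / 2 ^ Suc t\<rfloor> = int b"
    by (intro floor_unique) simp_all
  moreover have "of_int 0 < x"
    using open_segment_real_bounds[OF assms r'(5) r'(2) r'(6) r'(4)] by blast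
  ultimately show ?thesis
    by simp
qed

lemma lattice_pos_row_node:
  "lattice_pos (row_node m i t a) = (of_int (inorder_rank t a), of_int (int (2 * m * i + t)))"
  unfolding row_node_def by simp

lemma lattice_pos_spine_node:
  "lattice_pos (spine_node m t a) = (of_int (- int t), real m * of_int (inorder_rank t a))"
  unfolding spine_node_def by simp

lemma lattice_pos_column_node: "lattice_pos (column_node j y) = (2 * real j, of_int (int y))"
  unfolding column_node_def by simp

lemma lattice_pos_Ints: "fst (lattice_pos w) \<in> \<int>" "snd (lattice_pos w) \<in> \<int>"
  unfolding lattice_pos_def by (simp_all split: prod.split)

lemma row_edge_interior:
  assumes "p \<in> straight_interior lattice_pos {row_node m i (Suc t) (b div 2), row_node m i t b}"
  shows "\<lfloor>snd p\<rfloor> = int (2 * m * i + t) \<and> snd p \<notin> \<int> \<and> 0 < fst p \<and>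
    \<lfloor>(fst p + 1) / 2 ^ Suc t\<rfloor> = int b"
proof -
  let ?P = "lattice_pos (row_node m i (Suc t) (b div 2))" and ?C = "lattice_pos (row_node m i t b)"
  let ?y = "int (2 * m * i + t)"
  have p: "p \<in> open_segment ?P ?C"
    using assms by (simp only: straight_interior_doubleton_eq)
  have "snd ?P = of_int (?y + 1)" "snd ?C = of_int ?y"
    unfolding lattice_pos_row_node by simp_all
  then have "snd p \<in> open_segment (of_int ?y) (of_int (?y + 1))"
    using open_segment_snd[OF p] by (simp add: open_segment_commute)
  then have "\<lfloor>snd p\<rfloor> = ?y \<and> snd p \<notin> \<int>"
    by (rule open_segment_unit_interval)
  moreover have "fst p \<in> open_segment (fst ?P) (fst ?C)"
    using open_segment_fst[OF p] inorder_rank_parent_child(5) by (simp add: lattice_pos_row_node)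
  then have "0 < fst p \<and> \<lfloor>(fst p + 1) / 2 ^ Suc t\<rfloor> = int b"
    unfolding lattice_pos_row_node fst_conv by (rule inorder_edge_interior)
  ultimately show ?thesis
    by blast
qed

lemma spine_edge_interior:
  assumes "0 < m"
    and "p \<in> straight_interior lattice_pos {spine_node m (Suc t) (b div 2), spine_node m t b}"
  shows "\<lfloor>fst p\<rfloor> = - int t - 1 \<and> fst p \<notin> \<int> \<and> \<lfloor>(snd p / m + 1) / 2 ^ Suc t\<rfloor> = int b"
proof -
  let ?P = "lattice_pos (spine_node m (Suc t) (b div 2))" and ?C = "lattice_pos (spine_node m t b)"
  have p: "p \<in> open_segment ?P ?C"
    using assms(2) by (simp only: straight_interior_doubleton_eq)
  have "fst ?P = of_int (- int t - 1)" "fst ?C = of_int (- int t - 1 + 1)"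
    unfolding lattice_pos_spine_node by simp_all
  then have "fst p \<in> open_segment (of_int (- int t - 1)) (of_int (- int t - 1 + 1))"
    using open_segment_fst[OF p] by simp
  then have "\<lfloor>fst p\<rfloor> = - int t - 1 \<and> fst p \<notin> \<int>"
    by (rule open_segment_unit_interval)
  moreover have "snd p \<in> open_segment (snd ?P) (snd ?C)"
    using open_segment_snd[OF p] inorder_rank_parent_child(5) assms(1)
    by (simp add: lattice_pos_spine_node)
  then have "snd p / m \<in> open_segment (of_int (inorder_rank (Suc t) (b div 2))) (of_int (inorder_rank t b))"
    using assms(1) unfolding lattice_pos_spine_node snd_conv by (intro open_segment_divide) simp_all
  then have "\<lfloor>(snd p / m + 1) / 2 ^ Suc t\<rfloor> = int b"
    by (blast dest: inorder_edge_interior)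
  ultimately show ?thesis
    by blast
qed

lemma column_edge_interior:
  assumes "p \<in> straight_interior lattice_pos {column_node j y, column_node j (Suc y)}"
  shows "fst p = 2 * real j \<and> \<lfloor>snd p\<rfloor> = int y \<and> snd p \<notin> \<int>"
proof -
  let ?P = "lattice_pos (column_node j y)" and ?C = "lattice_pos (column_node j (Suc y))"
  have p: "p \<in> open_segment ?P ?C"
    using assms by (simp only: straight_interior_doubleton_eq)
  have "fst p = 2 * real j"
    using open_segment_fst_const[OF p] by (simp add: lattice_pos_column_node)
  moreover have "snd ?P = of_int (int y)" "snd ?C = of_int (int y + 1)"
    unfolding lattice_pos_column_node by simp_all
  then have "snd p \<in> open_segment (of_int (int y)) (of_int (int y + 1))"
    using open_segment_snd[OF p] by simp
  then have "\<lfloor>snd p\<rfloor> = int y \<and> snd p \<notin> \<int>"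
    by (rule open_segment_unit_interval)
  ultimately show ?thesis
    by blast
qed

lemma row_edges_same_cell:
  assumes "t < m" "t' < m"
    and "p \<in> straight_interior lattice_pos {row_node m i (Suc t) (b div 2), row_node m i t b}"
    and "q \<in> straight_interior lattice_pos {row_node m i' (Suc t') (b' div 2), row_node m i' t' b'}"
    and "\<lfloor>snd p\<rfloor> = \<lfloor>snd q\<rfloor>" "fst p = fst q"
  shows "i = i' \<and> t = t' \<and> b = b'"
proof -
  note p = row_edge_interior[OF assms(3)] and q = row_edge_interior[OF assms(4)]
  have "int (2 * m * i + t) = int (2 * m * i' + t')"
    using conjunct1[OF p] conjunct1[OF q] assms(5) by metis
  then have "2 * m * i + t = 2 * m * i' + t'"
    by (simp only: of_nat_eq_iff)
  moreover have "t < 2 * m" "t' < 2 * m"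
    using assms(1,2) by linarith+
  ultimately have "i = i' \<and> t = t'"
    using mult_add_less_inject by blast
  moreover from this have "b = b'"
    using p q assms(6) by simp
  ultimately show ?thesis
    by blast
qed

lemma row_edges_interior_disjoint:
  assumes "e1 \<in> row_edges m" "e2 \<in> row_edges m"
    and "p \<in> straight_interior lattice_pos e1" "p \<in> straight_interior lattice_pos e2"
  shows "e1 = e2"
proof -
  obtain i t b where e1: "t < m" "e1 = {row_node m i (Suc t) (b div 2), row_node m i t b}"
    using assms(1) by (rule row_edgeE)
  obtain i' t' b' where e2: "t' < m" "e2 = {row_node m i' (Suc t') (b' div 2), row_node m i' t' b'}"
    using assms(2) by (rule row_edgeE)
  show ?thesis
    using row_edges_same_cell[OF e1(1) e2(1) assms(3)[unfolded e1(2)] assms(4)[unfolded e2(2)]]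
      e1(2) e2(2) by simp
qed

lemma spine_edges_interior_disjoint:
  assumes "0 < m" "e1 \<in> spine_edges m" "e2 \<in> spine_edges m"
    and "p \<in> straight_interior lattice_pos e1" "p \<in> straight_interior lattice_pos e2"
  shows "e1 = e2"
proof -
  obtain t b where e1: "e1 = {spine_node m (Suc t) (b div 2), spine_node m t b}"
    using assms(2) by (rule spine_edgeE)
  obtain t' b' where e2: "e2 = {spine_node m (Suc t') (b' div 2), spine_node m t' b'}"
    using assms(3) by (rule spine_edgeE)
  note p = spine_edge_interior[OF assms(1) assms(4)[unfolded e1]]
    and q = spine_edge_interior[OF assms(1) assms(5)[unfolded e2]]
  then have "t = t'"
    by simp
  moreover from this have "b = b'"
    using p q by simp
  ultimately show ?thesis
    using e1 e2 by simp
qed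

lemma column_edges_interior_disjoint:
  assumes "e1 \<in> column_edges m" "e2 \<in> column_edges m"
    and "p \<in> straight_interior lattice_pos e1" "p \<in> straight_interior lattice_pos e2"
  shows "e1 = e2"
proof -
  obtain j y where e1: "e1 = {column_node j y, column_node j (Suc y)}"
    using assms(1) by (rule column_edgeE)
  obtain j' y' where e2: "e2 = {column_node j' y', column_node j' (Suc y')}"
    using assms(2) by (rule column_edgeE)
  show ?thesis
    using column_edge_interior[OF assms(3)[unfolded e1]] column_edge_interior[OF assms(4)[unfolded e2]]
      e1 e2 by simp
qed

lemma spine_interior_fst_neg: 
  assumes "0 < m" "e \<in> spine_edges m" "p \<in> straight_interior lattice_pos e"
  shows "fst p < 0"
proof -
  obtain t b where "e = {spine_node m (Suc t) (b div 2), spine_node m t b}"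
    using assms(2) by (rule spine_edgeE)
  then have "\<lfloor>fst p\<rfloor> = - int t - 1"
    using spine_edge_interior[OF assms(1)] assms(3) by blast
  then show ?thesis
    by linarith
qed

lemma row_interior_fst_pos:
  assumes "e \<in> row_edges m" "p \<in> straight_interior lattice_pos e"
  shows "0 < fst p"
  using assms(1) by (rule row_edgeE) (use assms(2) row_edge_interior in blast)

lemma column_interior_fst_nonneg:
  assumes "e \<in> column_edges m" "p \<in> straight_interior lattice_pos e"
  shows "0 \<le> fst p"
  using assms(1) by (rule column_edgeE) (use assms(2) column_edge_interior in fastforce)

text \<open>A column edge crosses at most one row edge, in at most one point: the column fixes the
  abscissa and the integer part of the ordinate, which determine the row edge.\<close>
lemma column_row_crossing_unique:
  assumes "e \<in> column_edges m" "e1 \<in> row_edges m" "e2 \<in> row_edges m"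
    and "p \<in> straight_interior lattice_pos e" "p \<in> straight_interior lattice_pos e1"
    and "q \<in> straight_interior lattice_pos e" "q \<in> straight_interior lattice_pos e2"
  shows "e1 = e2 \<and> p = q"
proof -
  obtain j y where e: "e = {column_node j y, column_node j (Suc y)}"
    using assms(1) by (rule column_edgeE)
  obtain i t b where e1: "t < m" "e1 = {row_node m i (Suc t) (b div 2), row_node m i t b}"
    using assms(2) by (rule row_edgeE)
  obtain i' t' b' where e2: "t' < m" "e2 = {row_node m i' (Suc t') (b' div 2), row_node m i' t' b'}"
    using assms(3) by (rule row_edgeE)
  have "fst p = fst q" "\<lfloor>snd p\<rfloor> = \<lfloor>snd q\<rfloor>"
    using column_edge_interior assms(4,6) unfolding e by simp_all
  then have "i = i' \<and> t = t' \<and> b = b'"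
    using row_edges_same_cell[OF e1(1) e2(1)] assms(5,7) unfolding e1(2) e2(2) by blast
  then have "e1 = e2"
    using e1(2) e2(2) by simp
  moreover have "p = q"
  proof (rule open_segment_eq_if_fst_eq)
    show "p \<in> open_segment (lattice_pos (row_node m i (Suc t) (b div 2))) (lattice_pos (row_node m i t b))"
      "q \<in> open_segment (lattice_pos (row_node m i (Suc t) (b div 2))) (lattice_pos (row_node m i t b))"
      using assms(5,7) unfolding \<open>e1 = e2\<close>[symmetric] e1(2) straight_interior_doubleton_eq .
    show "fst (lattice_pos (row_node m i (Suc t) (b div 2))) \<noteq> fst (lattice_pos (row_node m i t b))"
      using inorder_rank_parent_child(5) by (simp add: lattice_pos_row_node)
  qed fact
  ultimately show ?thesis
    by blast
qed

lemma tree_grid_crossing_partner: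
  assumes "0 < m" "e \<in> tree_grid_edges m" "e' \<in> tree_grid_edges m" "e \<noteq> e'"
    and "p \<in> straight_interior lattice_pos e" "p \<in> straight_interior lattice_pos e'"
    and "e \<notin> column_edges m"
  shows "e \<in> row_edges m \<and> e' \<in> column_edges m"
proof -
  have e: "e \<in> row_edges m \<or> e \<in> spine_edges m"
    and e': "e' \<in> row_edges m \<or> e' \<in> spine_edges m \<or> e' \<in> column_edges m"
    using assms(2,3,7) unfolding tree_grid_edges_def by blast+
  have "e \<in> row_edges m"
  proof (rule ccontr)
    assume "e \<notin> row_edges m"
    with e have "e \<in> spine_edges m"
      by blast
    then have "fst p < 0"
      using spine_interior_fst_neg[OF assms(1) _ assms(5)] by blast
    then have "e' \<in> spine_edges m"
      using e' row_interior_fst_pos[OF _ assms(6)] column_interior_fst_nonneg[OF _ assms(6)] by force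
    then show False
      using spine_edges_interior_disjoint[OF assms(1) \<open>e \<in> spine_edges m\<close> _ assms(5,6)] assms(4)
      by blast
  qed
  moreover have "e' \<notin> row_edges m"
    using row_edges_interior_disjoint[OF \<open>e \<in> row_edges m\<close> _ assms(5,6)] assms(4) by blast
  moreover have "e' \<notin> spine_edges m"
    using row_interior_fst_pos[OF \<open>e \<in> row_edges m\<close> assms(5)] spine_interior_fst_neg[OF assms(1) _ assms(6)]
    by fastforce
  ultimately show ?thesis
    using e' by blast
qed

lemma lattice_pos_notin_tree_grid_interior:
  assumes "0 < m" "e \<in> tree_grid_edges m"
  shows "lattice_pos w \<notin> straight_interior lattice_pos e"
proof
  assume w: "lattice_pos w \<in> straight_interior lattice_pos e"
  from assms(2) consider "e \<in> row_edges m" | "e \<in> spine_edges m" | "e \<in> column_edges m"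
    unfolding tree_grid_edges_def by blast
  then show False
  proof cases
    case 1
    then show False
      by (rule row_edgeE) (use w row_edge_interior lattice_pos_Ints in blast)
  next
    case 2
    then show False
      by (rule spine_edgeE) (use w spine_edge_interior[OF assms(1)] lattice_pos_Ints in blast)
  next
    case 3
    then show False
      by (rule column_edgeE) (use w column_edge_interior lattice_pos_Ints in blast)
  qed
qed

abbreviation tree_grid_crossings :: "nat \<Rightarrow> ((real \<times> real) \<times> nat set set) set" where
  "tree_grid_crossings m \<equiv>
     crossings (tree_grid_vertices m) (tree_grid_edges m) lattice_pos (straight_drawing lattice_pos)"

lemma tree_grid_crossing_meets_column:
  assumes "0 < m" "x \<in> tree_grid_crossings m"
  shows "snd x \<inter> column_edges m \<noteq> {}"
proof -
  obtain p e1 e2 where x: "x = (p, {e1, e2})" "e1 \<in> tree_grid_edges m" "e2 \<in> tree_grid_edges m"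
    "e1 \<noteq> e2" "p \<in> straight_interior lattice_pos e1" "p \<in> straight_interior lattice_pos e2"
    using assms(2) unfolding crossings_straight_drawing by blast
  then have "e1 \<in> column_edges m \<or> e2 \<in> column_edges m"
    using tree_grid_crossing_partner[OF assms(1) x(2-6)] by blast
  then show ?thesis
    using x(1) by auto
qed

lemma tree_grid_column_crossingE:
  assumes "0 < m" "e \<in> column_edges m" "x \<in> tree_grid_crossings m" "e \<in> snd x"
  obtains p e' where "x = (p, {e, e'})" "e' \<in> row_edges m"
    "p \<in> straight_interior lattice_pos e" "p \<in> straight_interior lattice_pos e'"
proof -
  obtain p e1 e2 where x: "x = (p, {e1, e2})" "e1 \<in> tree_grid_edges m" "e2 \<in> tree_grid_edges m"
    "e1 \<noteq> e2" "p \<in> straight_interior lattice_pos e1" "p \<in> straight_interior lattice_pos e2"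
    using assms(3) unfolding crossings_straight_drawing by blast
  have "\<exists>e'. x = (p, {e, e'}) \<and> e \<in> tree_grid_edges m \<and> e' \<in> tree_grid_edges m \<and> e' \<noteq> e \<and>
      p \<in> straight_interior lattice_pos e \<and> p \<in> straight_interior lattice_pos e'"
  proof (cases "e = e1")
    case True
    then show ?thesis
      using x by blast
  next
    case False
    then have "e = e2" "x = (p, {e2, e1})"
      using assms(4) x(1) by (auto simp: insert_commute)
    then show ?thesis
      using x by blast
  qed
  then obtain e' where e': "x = (p, {e, e'})" "e \<in> tree_grid_edges m" "e' \<in> tree_grid_edges m"
    "e' \<noteq> e" "p \<in> straight_interior lattice_pos e" "p \<in> straight_interior lattice_pos e'"
    by blast
  have "e' \<notin> column_edges m"
    using column_edges_interior_disjoint[OF assms(2) _ e'(5,6)] e'(4) by blast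
  then have "e' \<in> row_edges m"
    using tree_grid_crossing_partner[OF assms(1) e'(3,2)] e'(4-6) by blast
  then show ?thesis
    using e' that by blast
qed

lemma tree_grid_column_crossings:
  assumes "0 < m" "e \<in> column_edges m"
  shows "finite {x \<in> tree_grid_crossings m. e \<in> snd x} \<and> card {x \<in> tree_grid_crossings m. e \<in> snd x} \<le> 1"
proof -
  let ?S = "{x \<in> tree_grid_crossings m. e \<in> snd x}"
  have eq: "x = y" if "x \<in> ?S" "y \<in> ?S" for x y
  proof -
    obtain p e1 where x: "x = (p, {e, e1})" "e1 \<in> row_edges m"
      "p \<in> straight_interior lattice_pos e" "p \<in> straight_interior lattice_pos e1"
      using tree_grid_column_crossingE[OF assms] \<open>x \<in> ?S\<close> by blast
    obtain q e2 where y: "y = (q, {e, e2})" "e2 \<in> row_edges m"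
      "q \<in> straight_interior lattice_pos e" "q \<in> straight_interior lattice_pos e2"
      using tree_grid_column_crossingE[OF assms] \<open>y \<in> ?S\<close> by blast
    have "e1 = e2 \<and> p = q"
      by (rule column_row_crossing_unique[OF assms(2) x(2) y(2) x(3,4) y(3,4)])
    then show ?thesis
      using x(1) y(1) by simp
  qed
  show ?thesis
  proof (cases "?S = {}")
    case False
    then obtain x where "x \<in> ?S"
      by blast
    then have "?S = {x}"
      using eq by blast
    then show ?thesis
      by simp
  next
    case True
    show ?thesis
      unfolding True by simp
  qed
qed

lemma tree_grid_1_gap_planar:
  assumes "0 < m"
  shows "k_gap_planar 1 (tree_grid_vertices m) (tree_grid_edges m)"
proof -
  have "valid_drawing (tree_grid_vertices m) (tree_grid_edges m) lattice_pos (straight_drawing lattice_pos)"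
  proof (rule valid_straight_drawing[OF simple_graph_tree_grid])
    show "inj_on lattice_pos (tree_grid_vertices m)"
      using inj_lattice_pos by (rule inj_on_subset) simp
    show "lattice_pos w \<notin> open_segment (lattice_pos u) (lattice_pos v)"
      if "{u, v} \<in> tree_grid_edges m" for u v w
      using lattice_pos_notin_tree_grid_interior[OF assms that, of w]
      unfolding straight_interior_doubleton_eq .
  qed
  then have "k_gap_planar_drawing 1 (tree_grid_vertices m) (tree_grid_edges m) lattice_pos
      (straight_drawing lattice_pos)"
    using tree_grid_crossing_meets_column[OF assms] tree_grid_column_crossings[OF assms]
    by (rule k_gap_planar_drawingI)
  then show ?thesis
    unfolding k_gap_planar_def by blast
qed

lemma two_powr_half_le: "2 \<le> m \<Longrightarrow> 2 powr (real m / 2) \<le> real (2 ^ m - 1 :: nat)"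
proof -
  assume "2 \<le> m"
  define s where "s = (2::real) powr (real m / 2)"
  have "s * s = 2 ^ m"
    unfolding s_def by (simp add: powr_add[symmetric] powr_realpow)
  moreover have "2 \<le> s"
    using \<open>2 \<le> m\<close> powr_mono[of 1 "real m / 2" 2] unfolding s_def by simp
  moreover have "2 * s \<le> s * s"
    using \<open>2 \<le> s\<close> by (intro mult_right_mono) auto
  ultimately have "s \<le> 2 ^ m - 1"
    by linarith
  then show ?thesis
    unfolding s_def by simp
qed

lemma tree_grid_treewidth_ge_powr:
  assumes "2 \<le> m"
  shows "2 powr (real m / 2) \<le> real (treewidth (tree_grid_vertices m) (tree_grid_edges m))"
proof -
  have "2 powr (real m / 2) \<le> real (2 ^ m - 1 :: nat)"
    using two_powr_half_le[OF assms] .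
  also have "\<dots> \<le> real (treewidth (tree_grid_vertices m) (tree_grid_edges m))"
    using tree_grid_treewidth[of m] assms by (intro of_nat_mono) simp
  finally show ?thesis .
qed

theorem theorem42:
  shows "\<exists>c::real. c > 0 \<and>
    infinite {r::nat. r \<ge> 1 \<and>
      (\<exists>(V::nat set) (E::nat set set).
          simple_graph V E \<and> k_gap_planar 1 V E \<and>
          radius V E \<le> enat r \<and>
          real (treewidth V E) \<ge> 2 powr (c * real r))}"
proof (intro exI conjI)
  show "(1 / 10 :: real) > 0"
    by simp
  let ?S = "{r::nat. r \<ge> 1 \<and> (\<exists>(V::nat set) (E::nat set set).
      simple_graph V E \<and> k_gap_planar 1 V E \<and> radius V E \<le> enat r \<and>
      real (treewidth V E) \<ge> 2 powr (1 / 10 * real r))}"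
  have "5 * m \<in> ?S" if "2 \<le> m" for m
    using that simple_graph_tree_grid[of m] tree_grid_1_gap_planar[of m] tree_grid_radius[of m]
      tree_grid_treewidth_ge_powr[OF that]
    by (intro CollectI conjI exI[of _ "tree_grid_vertices m"] exI[of _ "tree_grid_edges m"]) simp_all
  then have "(\<lambda>m. 5 * m) ` {2..} \<subseteq> ?S"
    by auto
  moreover have "infinite ((\<lambda>m::nat. 5 * m) ` {2..})"
    using infinite_Ici[of "2::nat"] finite_imageD[of "\<lambda>m. 5 * m" "{2::nat..}"]
    by (auto simp: inj_on_def)
  ultimately show "infinite ?S"
    by (rule infinite_super)
qed

end
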